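(* In the known-scale model of the context, suppose $k_n\sim n^a$ for some $0<a<1$, and let $0\le\delta<1-a$ be such that there exists, for each $n$, $\theta_{0n}=(\theta_{10n},\dots,\theta_{K(n)0n})$ with $\|f_{\theta_{0n}}-f_0\|_2=o(n^{-\delta})$ (A1). For $\kappa>0$ let $N_{\kappa/n^\delta}=\{\omega_n:\sigma_0^{-2}\int(f_{\theta_n}(\mathbf x)-f_0(\mathbf x))^2d\mathbf x<\kappa/n^\delta\}$. Then for every $\kappa>0$ and $\tilde\kappa>0$: 1. if $\sum_{i=1}^{K(n)}\theta_{i0n}^2=o(n^{1-\delta})$ (A2) and $p(\omega_n)=\prod_{i=1}^{K(n)}(2\pi\zeta^2)^{-1/2}e^{-\theta_{in}^2/(2\zeta^2)}$, then $\int_{N_{\kappa/n^\delta}}p(\omega_n)d\omega_n\ge e^{-\tilde\kappa n^{1-\delta}}$ for all sufficiently large $n$; 2. if $\sum_{i=1}^{K(n)}\theta_{i0n}^2=O(n^v)$ for some $v>1$ (A3) and $p(\omega_n)=\prod_{i=1}^{K(n)}(2\pi\zeta^2n^u)^{-1/2}e^{-\theta_{in}^2/(2\zeta^2n^u)}$ with $u>v$, then $\int_{N_{\kappa/n^\delta}}p(\omega_n)d\omega_n\ge e^{-\tilde\kappa n^{1-\delta}}$ for all sufficiently large $n$.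
   Context: $\sigma_0>0$ is a fixed known noise standard deviation; $f_0$ is a square-integrable function on $[0,1]^p$, $p$ fixed; $\|\cdot\|_2$ is the $L_2([0,1]^p)$ norm. $\psi(u)=1/(1+e^{-u})$, $f_{\theta_n}(\mathbf x)=\beta_0+\sum_{j=1}^{k_n}\beta_j\psi(\gamma_{j0}+\sum_{h=1}^p\gamma_{jh}x_h)$, $\omega_n=\theta_n=(\theta_{1n},\dots,\theta_{K(n)n})$ the vector of all network parameters, $K(n)$ its length. $\zeta>0$ is fixed. *)

theory Defs
  imports "HOL-Probability.Probability" "HOL-Library.Landau_Symbols"
begin

definition psi :: "real \<Rightarrow> real" where
  "psi u = 1 / (1 + exp (- u))"

definition nparams :: "nat \<Rightarrow> nat \<Rightarrow> nat" where
  "nparams p k = 1 + k * (p + 2)"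

text \<open>Parameter layout of theta : nat => real (indices 0 .. k(p+2)):
  beta_0 = theta 0, beta_j = theta j (1 <= j <= k),
  gamma_jh = theta (gidx p k j h) (1 <= j <= k, 0 <= h <= p).\<close>
definition gidx :: "nat \<Rightarrow> nat \<Rightarrow> nat \<Rightarrow> nat \<Rightarrow> nat" where
  "gidx p k j h = k + (j - 1) * (p + 1) + h + 1"

definition fnet :: "nat \<Rightarrow> nat \<Rightarrow> (nat \<Rightarrow> real) \<Rightarrow> (nat \<Rightarrow> real) \<Rightarrow> real" where
  "fnet p k \<theta> x = \<theta> 0 + (\<Sum>j\<in>{1..k}. \<theta> j *
      psi (\<theta> (gidx p k j 0) + (\<Sum>h\<in>{1..p}. \<theta> (gidx p k j h) * x h)))"

definition cube :: "nat \<Rightarrow> (nat \<Rightarrow> real) measure" where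
  "cube p = PiM {1..p} (\<lambda>_. lebesgue_on {0..1})"

definition L2sq :: "nat \<Rightarrow> ((nat \<Rightarrow> real) \<Rightarrow> real) \<Rightarrow> ((nat \<Rightarrow> real) \<Rightarrow> real) \<Rightarrow> real" where
  "L2sq p f g = integral\<^sup>L (cube p) (\<lambda>x. (f x - g x)\<^sup>2)"

definition L2dist :: "nat \<Rightarrow> ((nat \<Rightarrow> real) \<Rightarrow> real) \<Rightarrow> ((nat \<Rightarrow> real) \<Rightarrow> real) \<Rightarrow> real" where
  "L2dist p f g = sqrt (L2sq p f g)"

definition parspace :: "nat \<Rightarrow> (nat \<Rightarrow> real) measure" where
  "parspace K = PiM {..<K} (\<lambda>_. lborel)"

text \<open>The neighbourhood N_{kappa/n^delta} (kappa here is the full radius eps = kappa/n^delta).\<close>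
definition Nbhd :: "nat \<Rightarrow> nat \<Rightarrow> real \<Rightarrow> ((nat \<Rightarrow> real) \<Rightarrow> real) \<Rightarrow> real \<Rightarrow> (nat \<Rightarrow> real) set" where
  "Nbhd p k \<sigma>0 f0 \<epsilon> = {\<omega> \<in> space (parspace (nparams p k)).
       L2sq p (fnet p k \<omega>) f0 / \<sigma>0\<^sup>2 < \<epsilon>}"

definition gprior :: "real \<Rightarrow> nat \<Rightarrow> (nat \<Rightarrow> real) \<Rightarrow> real" where
  "gprior s2 K \<omega> = (\<Prod>i<K. (2 * pi * s2) powr (-1/2) * exp (- (\<omega> i)\<^sup>2 / (2 * s2)))"

definition prior_mass :: "real \<Rightarrow> nat \<Rightarrow> (nat \<Rightarrow> real) set \<Rightarrow> ennreal" where
  "prior_mass s2 K N = (\<integral>\<^sup>+ \<omega>. ennreal (gprior s2 K \<omega>) * indicator N \<omega> \<partial>parspace K)"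

end

theory Submission
  imports Defs "HOL-Real_Asymp.Real_Asymp"
begin

text \<open>
  The neighbourhood contains a small cube of parameters around \<theta>0n, and we bound the prior
  mass of that cube. The logistic function is 1-Lipschitz and bounded by 1, so moving every
  parameter by at most \<eta> moves the network output uniformly on the cube [0,1]^p by at most
  \<eta> C with C = 1 + k (1 + (1 + |\<theta>0n|^2) (p + 1)). Hence the cube of half-width
  \<eta> = \<sigma>0 sqrt \<epsilon> / (2 C) lies in the neighbourhood of radius \<epsilon> as soon as the squared
  L2 error of \<theta>0n is below \<epsilon> \<sigma>0^2 / 4, which (A1) guarantees eventually for
  \<epsilon> = \<kappa> / n^\<delta>. On that cube the Gaussian density with variance s^2 is at least
  prod_i exp (- (\<theta>0n_i^2 + \<eta>^2) / s^2) / sqrt (2 pi s^2), so its prior mass is at least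
  exp (- (|\<theta>0n|^2 + K \<eta>^2) / s^2 - K ln (sqrt (2 pi s^2) / (2 \<eta>))), where K = K(n) is
  the number of parameters. Since K = O(n^a), ln C = O(ln n) and a < 1 - \<delta>, every term
  except |\<theta>0n|^2 / s^2 is o(n^(1-\<delta>)). The remaining term is o(n^(1-\<delta>)) by (A2) when
  s^2 = \<zeta>^2, and it tends to zero by (A3) when s^2 = \<zeta>^2 n^u with u > v.
\<close>

lemma square_add_le: "((a::real) + b)\<^sup>2 \<le> 2 * a\<^sup>2 + 2 * b\<^sup>2"
  using zero_le_power2[of "a - b"] unfolding power2_diff power2_sum by linarith

lemma mult_le_mult_abs:
  fixes K Kb x y :: real
  assumes "0 \<le> K" "K \<le> Kb" "x \<le> y"
  shows "K * x \<le> Kb * \<bar>y\<bar>"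
proof (cases "x \<le> 0")
  case True
  then have "K * x \<le> 0"
    using assms(1) by (simp add: mult_nonneg_nonpos)
  also have "0 \<le> Kb * \<bar>y\<bar>"
    using assms(1,2) by simp
  finally show ?thesis .
next
  case False
  then have "K * x \<le> Kb * y"
    using assms by (intro mult_mono) auto
  then show ?thesis
    using False assms(3) by simp
qed

lemma abs_psi_le_one: "\<bar>psi u\<bar> \<le> 1"
  unfolding psi_def by (simp add: add_pos_pos)

lemma abs_psi_diff_le: "\<bar>psi a - psi b\<bar> \<le> \<bar>a - b\<bar>"
proof -
  have deriv: "(psi has_field_derivative exp (- u) / (1 + exp (- u))\<^sup>2) (at u within UNIV)" for u
  proof -
    have "1 + exp (- u) \<noteq> 0"
      using exp_gt_zero[of "- u"] by linarith
    then show ?thesis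
      unfolding psi_def by (auto intro!: derivative_eq_intros simp: power2_eq_square)
  qed
  have deriv_le: "norm (exp (- u) / (1 + exp (- u))\<^sup>2) \<le> 1" for u :: real
  proof -
    have "exp (- u) \<le> (1 + exp (- u))\<^sup>2"
      by (simp add: power2_eq_square algebra_simps)
    then show ?thesis
      by (simp add: divide_le_eq_1)
  qed
  show ?thesis
    using field_differentiable_bound[OF convex_UNIV deriv deriv_le, of a b] by simp
qed

definition preact :: "nat \<Rightarrow> nat \<Rightarrow> (nat \<Rightarrow> real) \<Rightarrow> nat \<Rightarrow> (nat \<Rightarrow> real) \<Rightarrow> real" where
  "preact p k \<theta> j x = \<theta> (gidx p k j 0) + (\<Sum>h\<in>{1..p}. \<theta> (gidx p k j h) * x h)"

lemma fnet_preact: "fnet p k \<theta> x = \<theta> 0 + (\<Sum>j\<in>{1..k}. \<theta> j * psi (preact p k \<theta> j x))"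
  unfolding fnet_def preact_def ..

lemma gidx_less_nparams:
  assumes "j \<in> {1..k}" "h \<le> p"
  shows "gidx p k j h < nparams p k"
proof -
  have "(j - 1) * (p + 1) + h + 1 \<le> j * (p + 1)"
    using assms by (cases j) auto
  also have "\<dots> \<le> k * (p + 1)"
    using assms by (intro mult_le_mono1) simp
  finally show ?thesis
    unfolding gidx_def nparams_def by (simp add: algebra_simps)
qed

lemma abs_preact_diff_le:
  assumes j: "j \<in> {1..k}"
    and close: "\<And>i. i < nparams p k \<Longrightarrow> \<bar>\<omega> i - \<theta> i\<bar> \<le> \<eta>"
    and x: "\<And>h. h \<in> {1..p} \<Longrightarrow> \<bar>x h\<bar> \<le> 1"
  shows "\<bar>preact p k \<omega> j x - preact p k \<theta> j x\<bar> \<le> (real p + 1) * \<eta>"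
proof -
  let ?d = "\<lambda>h. \<omega> (gidx p k j h) - \<theta> (gidx p k j h)"
  have d: "\<bar>?d h\<bar> \<le> \<eta>" if "h \<le> p" for h
    using close[OF gidx_less_nparams[OF j that]] .
  then have "0 \<le> \<eta>"
    by (metis abs_ge_zero order_trans zero_le)
  have "\<bar>preact p k \<omega> j x - preact p k \<theta> j x\<bar> = \<bar>?d 0 + (\<Sum>h\<in>{1..p}. ?d h * x h)\<bar>"
    unfolding preact_def by (simp add: sum_subtractf left_diff_distrib)
  also have "\<dots> \<le> \<bar>?d 0\<bar> + (\<Sum>h\<in>{1..p}. \<bar>?d h\<bar> * \<bar>x h\<bar>)"
    unfolding abs_mult[symmetric] by (rule order_trans[OF abs_triangle_ineq add_left_mono[OF sum_abs]])
  also have "\<dots> \<le> \<eta> + (\<Sum>h\<in>{1..p}. \<eta> * 1)"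
    using d x \<open>0 \<le> \<eta>\<close> by (intro add_mono sum_mono mult_mono) auto
  finally show ?thesis
    by (simp add: algebra_simps)
qed

lemma abs_neuron_diff_le:
  assumes j: "j \<in> {1..k}"
    and close: "\<And>i. i < nparams p k \<Longrightarrow> \<bar>\<omega> i - \<theta> i\<bar> \<le> \<eta>"
    and bounded: "\<And>i. i < nparams p k \<Longrightarrow> \<bar>\<theta> i\<bar> \<le> M"
    and x: "\<And>h. h \<in> {1..p} \<Longrightarrow> \<bar>x h\<bar> \<le> 1"
  shows "\<bar>\<omega> j * psi (preact p k \<omega> j x) - \<theta> j * psi (preact p k \<theta> j x)\<bar>
    \<le> \<eta> + M * ((real p + 1) * \<eta>)"
proof -
  let ?A = "preact p k \<omega> j x" and ?B = "preact p k \<theta> j x"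
  have "j < nparams p k"
    using j by (auto simp: nparams_def)
  then have "\<bar>\<omega> j - \<theta> j\<bar> \<le> \<eta>" "\<bar>\<theta> j\<bar> \<le> M"
    using close bounded by auto
  have "\<bar>psi ?A - psi ?B\<bar> \<le> (real p + 1) * \<eta>"
    by (rule order_trans[OF abs_psi_diff_le abs_preact_diff_le[OF j close x]])
  have "\<bar>\<omega> j * psi ?A - \<theta> j * psi ?B\<bar> = \<bar>(\<omega> j - \<theta> j) * psi ?A + \<theta> j * (psi ?A - psi ?B)\<bar>"
    by (simp add: algebra_simps)
  also have "\<dots> \<le> \<bar>\<omega> j - \<theta> j\<bar> * \<bar>psi ?A\<bar> + \<bar>\<theta> j\<bar> * \<bar>psi ?A - psi ?B\<bar>"
    unfolding abs_mult[symmetric] by (rule abs_triangle_ineq)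
  also have "\<dots> \<le> \<eta> * 1 + M * ((real p + 1) * \<eta>)"
    using \<open>\<bar>\<omega> j - \<theta> j\<bar> \<le> \<eta>\<close> \<open>\<bar>\<theta> j\<bar> \<le> M\<close> \<open>\<bar>psi ?A - psi ?B\<bar> \<le> (real p + 1) * \<eta>\<close>
      abs_psi_le_one[of ?A]
    by (intro add_mono mult_mono) auto
  finally show ?thesis
    by simp
qed

lemma abs_fnet_diff_le:
  assumes close: "\<And>i. i < nparams p k \<Longrightarrow> \<bar>\<omega> i - \<theta> i\<bar> \<le> \<eta>"
    and bounded: "\<And>i. i < nparams p k \<Longrightarrow> \<bar>\<theta> i\<bar> \<le> M"
    and x: "\<And>h. h \<in> {1..p} \<Longrightarrow> \<bar>x h\<bar> \<le> 1"
  shows "\<bar>fnet p k \<omega> x - fnet p k \<theta> x\<bar> \<le> \<eta> * (1 + real k * (1 + M * (real p + 1)))"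
proof -
  have "\<bar>fnet p k \<omega> x - fnet p k \<theta> x\<bar>
      = \<bar>(\<omega> 0 - \<theta> 0) + (\<Sum>j\<in>{1..k}. \<omega> j * psi (preact p k \<omega> j x) - \<theta> j * psi (preact p k \<theta> j x))\<bar>"
    unfolding fnet_preact by (simp add: sum_subtractf)
  also have "\<dots> \<le> \<bar>\<omega> 0 - \<theta> 0\<bar>
      + (\<Sum>j\<in>{1..k}. \<bar>\<omega> j * psi (preact p k \<omega> j x) - \<theta> j * psi (preact p k \<theta> j x)\<bar>)"
    by (rule order_trans[OF abs_triangle_ineq add_left_mono[OF sum_abs]])
  also have "\<dots> \<le> \<eta> + (\<Sum>j\<in>{1..k}. \<eta> + M * ((real p + 1) * \<eta>))"
    using close[of 0] abs_neuron_diff_le[where \<omega> = \<omega> and \<theta> = \<theta> and x = x, OF _ close bounded x]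
    by (intro add_mono sum_mono) (auto simp: nparams_def)
  also have "\<dots> = \<eta> * (1 + real k * (1 + M * (real p + 1)))"
    by (simp add: algebra_simps)
  finally show ?thesis .
qed

lemma abs_fnet_le: "\<bar>fnet p k \<theta> x\<bar> \<le> \<bar>\<theta> 0\<bar> + (\<Sum>j\<in>{1..k}. \<bar>\<theta> j\<bar>)"
proof -
  have "\<bar>fnet p k \<theta> x\<bar> \<le> \<bar>\<theta> 0\<bar> + (\<Sum>j\<in>{1..k}. \<bar>\<theta> j * psi (preact p k \<theta> j x)\<bar>)"
    unfolding fnet_preact by (rule order_trans[OF abs_triangle_ineq add_left_mono[OF sum_abs]])
  also have "\<dots> \<le> \<bar>\<theta> 0\<bar> + (\<Sum>j\<in>{1..k}. \<bar>\<theta> j\<bar>)"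
    unfolding abs_mult by (intro add_left_mono sum_mono mult_left_le abs_psi_le_one abs_ge_zero)
  finally show ?thesis .
qed

lemma prob_space_cube: "prob_space (cube p)"
  unfolding cube_def
proof (intro prob_space_PiM prob_spaceI)
  show "emeasure (lebesgue_on {0..1}) (space (lebesgue_on {0..1::real})) = 1"
    by (simp add: emeasure_restrict_space)
qed

lemma cube_coordinate_abs_le: "x \<in> space (cube p) \<Longrightarrow> h \<in> {1..p} \<Longrightarrow> \<bar>x h\<bar> \<le> 1"
  unfolding cube_def by (auto simp: space_PiM PiE_iff)

lemma borel_measurable_psi: "psi \<in> borel_measurable borel"
  unfolding psi_def by measurable

lemma fnet_borel_measurable: "fnet p k \<theta> \<in> borel_measurable (cube p)"
proof -
  have coordinate: "(\<lambda>x. x h) \<in> borel_measurable (cube p)" if "h \<in> {1..p}" for h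
  proof -
    have "(\<lambda>x. x h) \<in> measurable (cube p) (lebesgue_on {0..1})"
      unfolding cube_def by (rule measurable_component_singleton) (use that in simp)
    from measurable_compose[OF this id_borel_measurable_lebesgue_on]
    show ?thesis
      by (simp add: id_def)
  qed
  show ?thesis
    unfolding fnet_def
    by (intro borel_measurable_add borel_measurable_sum borel_measurable_times borel_measurable_const
        measurable_compose[OF _ borel_measurable_psi] coordinate) auto
qed

lemma (in finite_measure) integrable_square_diff_of_bounded:
  fixes f g :: "'a \<Rightarrow> real"
  assumes g: "g \<in> borel_measurable M" "\<And>x. x \<in> space M \<Longrightarrow> \<bar>g x\<bar> \<le> c"
    and f: "f \<in> borel_measurable M" "integrable M (\<lambda>x. (f x)\<^sup>2)"
  shows "integrable M (\<lambda>x. (g x - f x)\<^sup>2)"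
proof -
  have "integrable M (\<lambda>x. 2 * c\<^sup>2 + 2 * (f x)\<^sup>2)"
    using f(2) by auto
  then show ?thesis
  proof (rule Bochner_Integration.integrable_bound)
    show "(\<lambda>x. (g x - f x)\<^sup>2) \<in> borel_measurable M"
      using g(1) f(1) by measurable
    show "AE x in M. norm ((g x - f x)\<^sup>2) \<le> norm (2 * c\<^sup>2 + 2 * (f x)\<^sup>2)"
    proof (rule AE_I2)
      fix x assume "x \<in> space M"
      then have "(g x)\<^sup>2 \<le> c\<^sup>2"
        using g(2) power2_le_iff_abs_le[of c "g x"] by force
      then show "norm ((g x - f x)\<^sup>2) \<le> norm (2 * c\<^sup>2 + 2 * (f x)\<^sup>2)"
        using square_add_le[of "g x" "- f x"] by simp
    qed
  qed
qed

lemma L2sq_nonneg: "0 \<le> L2sq p f g"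
  unfolding L2sq_def by (rule integral_nonneg_AE) simp

lemma L2sq_le_of_uniformly_close:
  assumes "integrable (cube p) (\<lambda>x. (f x - f0 x)\<^sup>2)"
    and close: "\<And>x. x \<in> space (cube p) \<Longrightarrow> \<bar>g x - f x\<bar> \<le> D"
  shows "L2sq p g f0 \<le> 2 * D\<^sup>2 + 2 * L2sq p f f0"
proof -
  interpret prob_space "cube p"
    by (rule prob_space_cube)
  have "L2sq p g f0 \<le> (\<integral>x. 2 * D\<^sup>2 + 2 * (f x - f0 x)\<^sup>2 \<partial>cube p)"
    unfolding L2sq_def
  proof (rule integral_mono')
    show "integrable (cube p) (\<lambda>x. 2 * D\<^sup>2 + 2 * (f x - f0 x)\<^sup>2)"
      using assms(1) by auto
    fix x assume x: "x \<in> space (cube p)"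
    show "0 \<le> 2 * D\<^sup>2 + 2 * (f x - f0 x)\<^sup>2"
      by simp
    have "(g x - f x)\<^sup>2 \<le> D\<^sup>2"
      using close[OF x] power2_le_iff_abs_le[of D "g x - f x"] by force
    then show "(g x - f0 x)\<^sup>2 \<le> 2 * D\<^sup>2 + 2 * (f x - f0 x)\<^sup>2"
      using square_add_le[of "g x - f x" "f x - f0 x"] by simp
  qed
  also have "\<dots> = 2 * D\<^sup>2 + 2 * L2sq p f f0"
    unfolding L2sq_def using assms(1) by (simp add: prob_space)
  finally show ?thesis .
qed

lemma gaussian_factor_ge:
  fixes w t \<eta> s2 :: real
  assumes "\<bar>w - t\<bar> \<le> \<eta>" "s2 > 0"
  shows "exp (- (t\<^sup>2 + \<eta>\<^sup>2) / s2) \<le> exp (- w\<^sup>2 / (2 * s2))"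
proof -
  have "\<bar>w\<bar> \<le> \<bar>t\<bar> + \<eta>"
    using abs_triangle_ineq[of t "w - t"] assms(1) by simp
  then have "w\<^sup>2 \<le> (\<bar>t\<bar> + \<eta>)\<^sup>2"
    using power2_le_iff_abs_le[of "\<bar>t\<bar> + \<eta>" w] by linarith
  also have "\<dots> \<le> 2 * (t\<^sup>2 + \<eta>\<^sup>2)"
    using square_add_le[of "\<bar>t\<bar>" \<eta>] by simp
  finally have "w\<^sup>2 / (2 * s2) \<le> 2 * (t\<^sup>2 + \<eta>\<^sup>2) / (2 * s2)"
    using assms(2) by (intro divide_right_mono) auto
  then show ?thesis
    by (simp add: add_divide_distrib diff_divide_distrib)
qed

lemma prior_mass_box_ge:
  fixes \<theta> :: "nat \<Rightarrow> real"
  assumes "\<eta> > 0" "s2 > 0"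
    and box: "(\<Pi>\<^sub>E i\<in>{..<K}. {\<theta> i - \<eta> .. \<theta> i + \<eta>}) \<subseteq> N"
  shows "ennreal ((\<Prod>i<K. (2 * pi * s2) powr (-1/2) * exp (- ((\<theta> i)\<^sup>2 + \<eta>\<^sup>2) / s2)) * (2 * \<eta>) ^ K)
    \<le> prior_mass s2 K N"
proof -
  define B where "B = (\<Pi>\<^sub>E i\<in>{..<K}. {\<theta> i - \<eta> .. \<theta> i + \<eta>})"
  define c where "c = (\<Prod>i<K. (2 * pi * s2) powr (-1/2) * exp (- ((\<theta> i)\<^sup>2 + \<eta>\<^sup>2) / s2))"
  have "c \<ge> 0"
    unfolding c_def by (intro prod_nonneg) auto
  interpret product_sigma_finite "\<lambda>_. lborel :: real measure"
    by (simp add: product_sigma_finite_def sigma_finite_lborel)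
  have "emeasure (parspace K) B = ennreal (2 * \<eta>) ^ K"
    unfolding B_def parspace_def using assms(1) by (subst emeasure_PiM) auto
  then have "ennreal (c * (2 * \<eta>) ^ K) = ennreal c * emeasure (parspace K) B"
    using assms(1) \<open>c \<ge> 0\<close> by (subst ennreal_mult) (auto simp: ennreal_power)
  also have "\<dots> = (\<integral>\<^sup>+ \<omega>. ennreal c * indicator B \<omega> \<partial>parspace K)"
    unfolding B_def parspace_def by (rule nn_integral_cmult_indicator[symmetric]) (intro sets_PiM_I_finite, auto)
  also have "\<dots> \<le> prior_mass s2 K N"
    unfolding prior_mass_def
  proof (intro nn_integral_mono)
    fix \<omega>
    show "ennreal c * indicator B \<omega> \<le> ennreal (gprior s2 K \<omega>) * indicator N \<omega>"
    proof (cases "\<omega> \<in> B")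
      case True
      then have "\<bar>\<omega> i - \<theta> i\<bar> \<le> \<eta>" if "i < K" for i
        using that unfolding B_def by (force simp: PiE_iff abs_le_iff)
      then have "c \<le> gprior s2 K \<omega>"
        unfolding c_def gprior_def using assms(2)
        by (intro prod_mono conjI mult_left_mono gaussian_factor_ge) auto
      moreover have "\<omega> \<in> N"
        using True box B_def by blast
      ultimately show ?thesis
        using True by (simp add: ennreal_leI)
    qed simp
  qed
  finally show ?thesis
    unfolding c_def .
qed

lemma gaussian_box_bound_eq:
  fixes \<theta> :: "nat \<Rightarrow> real"
  assumes "\<eta> > 0" "s2 > 0"
  shows "(\<Prod>i<K. (2 * pi * s2) powr (-1/2) * exp (- ((\<theta> i)\<^sup>2 + \<eta>\<^sup>2) / s2)) * (2 * \<eta>) ^ K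
    = exp (- (((\<Sum>i<K. (\<theta> i)\<^sup>2) + K * \<eta>\<^sup>2) / s2 + K * ln (sqrt (2 * pi * s2) / (2 * \<eta>))))"
proof -
  define L where "L = ln (sqrt (2 * pi * s2) / (2 * \<eta>))"
  have inv_sqrt: "(2 * pi * s2) powr - (1/2) = 1 / sqrt (2 * pi * s2)"
    using assms(2) by (simp add: powr_minus_divide powr_half_sqrt flip: minus_divide_left)
  have "(\<Sum>i<K. - ((\<theta> i)\<^sup>2 + \<eta>\<^sup>2) / s2 - L) = - (((\<Sum>i<K. (\<theta> i)\<^sup>2) + K * \<eta>\<^sup>2) / s2 + K * L)"
    by (simp add: sum_subtractf sum.distrib sum_negf add_divide_distrib diff_divide_distrib
        flip: sum_divide_distrib)
  then have "exp (- (((\<Sum>i<K. (\<theta> i)\<^sup>2) + K * \<eta>\<^sup>2) / s2 + K * L))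
      = (\<Prod>i<K. exp (- ((\<theta> i)\<^sup>2 + \<eta>\<^sup>2) / s2 - L))"
    by (simp flip: exp_sum)
  also have "\<dots> = (\<Prod>i<K. (2 * pi * s2) powr (-1/2) * exp (- ((\<theta> i)\<^sup>2 + \<eta>\<^sup>2) / s2) * (2 * \<eta>))"
    using assms by (intro prod.cong) (simp_all add: L_def exp_diff inv_sqrt)
  also have "\<dots> = (\<Prod>i<K. (2 * pi * s2) powr (-1/2) * exp (- ((\<theta> i)\<^sup>2 + \<eta>\<^sup>2) / s2)) * (2 * \<eta>) ^ K"
    by (simp add: prod.distrib)
  finally show ?thesis
    unfolding L_def ..
qed

lemma box_subset_Nbhd:
  fixes \<theta> :: "nat \<Rightarrow> real"
  assumes f0_meas: "f0 \<in> borel_measurable (cube p)"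
    and f0_sq: "integrable (cube p) (\<lambda>x. (f0 x)\<^sup>2)"
    and "\<sigma>0 > 0"
    and small: "2 * (\<eta> * (1 + real k * (1 + (1 + (\<Sum>i<nparams p k. (\<theta> i)\<^sup>2)) * (real p + 1))))\<^sup>2
      + 2 * L2sq p (fnet p k \<theta>) f0 < \<epsilon> * \<sigma>0\<^sup>2"
  shows "(\<Pi>\<^sub>E i\<in>{..<nparams p k}. {\<theta> i - \<eta> .. \<theta> i + \<eta>}) \<subseteq> Nbhd p k \<sigma>0 f0 \<epsilon>"
proof
  interpret prob_space "cube p"
    by (rule prob_space_cube)
  fix \<omega> assume \<omega>: "\<omega> \<in> (\<Pi>\<^sub>E i\<in>{..<nparams p k}. {\<theta> i - \<eta> .. \<theta> i + \<eta>})"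
  have close: "\<bar>\<omega> i - \<theta> i\<bar> \<le> \<eta>" if "i < nparams p k" for i
    using \<omega> that by (force simp: PiE_iff abs_le_iff)
  have bounded: "\<bar>\<theta> i\<bar> \<le> 1 + (\<Sum>i<nparams p k. (\<theta> i)\<^sup>2)" if "i < nparams p k" for i
  proof -
    have "\<bar>\<theta> i\<bar> \<le> 1 + (\<theta> i)\<^sup>2"
      using zero_le_power2[of "\<bar>\<theta> i\<bar> - 1"] unfolding power2_diff by simp
    also have "(\<theta> i)\<^sup>2 \<le> (\<Sum>i<nparams p k. (\<theta> i)\<^sup>2)"
      using that by (intro member_le_sum) auto
    finally show ?thesis
      by simp
  qed
  have "integrable (cube p) (\<lambda>x. (fnet p k \<theta> x - f0 x)\<^sup>2)"
    by (rule integrable_square_diff_of_bounded[OF fnet_borel_measurable abs_fnet_le f0_meas f0_sq])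
  moreover have "\<bar>fnet p k \<omega> x - fnet p k \<theta> x\<bar>
      \<le> \<eta> * (1 + real k * (1 + (1 + (\<Sum>i<nparams p k. (\<theta> i)\<^sup>2)) * (real p + 1)))"
    if "x \<in> space (cube p)" for x
    using abs_fnet_diff_le[OF close bounded cube_coordinate_abs_le[OF that]] .
  ultimately have "L2sq p (fnet p k \<omega>) f0
      \<le> 2 * (\<eta> * (1 + real k * (1 + (1 + (\<Sum>i<nparams p k. (\<theta> i)\<^sup>2)) * (real p + 1))))\<^sup>2
        + 2 * L2sq p (fnet p k \<theta>) f0"
    by (rule L2sq_le_of_uniformly_close)
  then have "L2sq p (fnet p k \<omega>) f0 < \<epsilon> * \<sigma>0\<^sup>2"
    using small by linarith
  moreover have "\<omega> \<in> space (parspace (nparams p k))"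
    using \<omega> unfolding parspace_def by (auto simp: space_PiM PiE_iff)
  ultimately show "\<omega> \<in> Nbhd p k \<sigma>0 f0 \<epsilon>"
    unfolding Nbhd_def using \<open>\<sigma>0 > 0\<close> by (simp add: divide_less_eq)
qed

lemma prior_mass_Nbhd_ge:
  fixes \<theta> :: "nat \<Rightarrow> real"
  assumes f0_meas: "f0 \<in> borel_measurable (cube p)"
    and f0_sq: "integrable (cube p) (\<lambda>x. (f0 x)\<^sup>2)"
    and "\<sigma>0 > 0" "s2 > 0" "\<epsilon> > 0"
    and fit: "L2sq p (fnet p k \<theta>) f0 < \<epsilon> * \<sigma>0\<^sup>2 / 4"
  defines "S \<equiv> \<Sum>i<nparams p k. (\<theta> i)\<^sup>2"
    and "C \<equiv> 1 + real k * (1 + (1 + (\<Sum>i<nparams p k. (\<theta> i)\<^sup>2)) * (real p + 1))"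
  assumes exponent: "S / s2 + nparams p k * (\<epsilon> * \<sigma>0\<^sup>2 / 4) / s2
      + nparams p k * ln (C * sqrt (2 * pi * s2) / (\<sigma>0 * sqrt \<epsilon>)) \<le> X"
  shows "ennreal (exp (- X)) \<le> prior_mass s2 (nparams p k) (Nbhd p k \<sigma>0 f0 \<epsilon>)"
proof -
  define r where "r = \<sigma>0 * sqrt \<epsilon> / 2"
  define \<eta> where "\<eta> = r / C"
  have "C \<ge> 1" "r > 0"
    unfolding C_def r_def using assms(3,5) by (auto simp: sum_nonneg)
  then have "\<eta> > 0" "\<eta> \<le> r" "\<eta> * C = r"
    unfolding \<eta>_def by (auto simp: divide_le_eq)
  have r_square: "r\<^sup>2 = \<epsilon> * \<sigma>0\<^sup>2 / 4"
    unfolding r_def using assms(5) by (simp add: power_mult_distrib power_divide)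
  have "(\<Pi>\<^sub>E i\<in>{..<nparams p k}. {\<theta> i - \<eta> .. \<theta> i + \<eta>}) \<subseteq> Nbhd p k \<sigma>0 f0 \<epsilon>"
    using fit \<open>\<eta> * C = r\<close> r_square
    by (intro box_subset_Nbhd[OF f0_meas f0_sq \<open>\<sigma>0 > 0\<close>]) (simp add: C_def S_def)
  note mass = prior_mass_box_ge[OF \<open>\<eta> > 0\<close> \<open>s2 > 0\<close> this,
      unfolded gaussian_box_bound_eq[OF \<open>\<eta> > 0\<close> \<open>s2 > 0\<close>]]
  have "\<eta>\<^sup>2 \<le> \<epsilon> * \<sigma>0\<^sup>2 / 4"
    unfolding r_square[symmetric] using \<open>\<eta> > 0\<close> \<open>\<eta> \<le> r\<close> by (intro power_mono) auto
  then have "nparams p k * \<eta>\<^sup>2 / s2 \<le> nparams p k * (\<epsilon> * \<sigma>0\<^sup>2 / 4) / s2"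
    using \<open>s2 > 0\<close> by (intro divide_right_mono mult_left_mono) auto
  moreover have "sqrt (2 * pi * s2) / (2 * \<eta>) = C * sqrt (2 * pi * s2) / (\<sigma>0 * sqrt \<epsilon>)"
    using \<open>C \<ge> 1\<close> unfolding \<eta>_def r_def by simp
  ultimately have "exp (- X)
    \<le> exp (- ((S + nparams p k * \<eta>\<^sup>2) / s2 + nparams p k * ln (sqrt (2 * pi * s2) / (2 * \<eta>))))"
    using exponent by (simp add: add_divide_distrib)
  with mass show ?thesis
    unfolding S_def by (blast intro: order_trans ennreal_leI)
qed

lemma ln_div_sqrt_power_radius:
  fixes n :: nat
  assumes "n > 0" "C > 0" "A > 0" "\<sigma>0 > 0" "\<kappa> > 0"
  shows "ln (C * A / (\<sigma>0 * sqrt (\<kappa> / real n powr \<delta>)))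
    = ln C + ln A - ln (\<sigma>0 * sqrt \<kappa>) + \<delta> / 2 * ln (real n)"
proof -
  have "sqrt (\<kappa> / real n powr \<delta>) = sqrt \<kappa> / real n powr (\<delta> / 2)"
    using assms(1) by (simp add: real_sqrt_divide powr_half_sqrt[symmetric] powr_powr)
  then have "C * A / (\<sigma>0 * sqrt (\<kappa> / real n powr \<delta>)) = C * A * real n powr (\<delta> / 2) / (\<sigma>0 * sqrt \<kappa>)"
    using assms(1) by simp
  then show ?thesis
    using assms by (simp add: ln_mult ln_div ln_powr)
qed

lemma prior_exponent_le:
  fixes n k :: nat
  assumes "n > 0" "s2 > 0" "\<sigma>0 > 0" "\<kappa> > 0" "real k \<le> kb" "0 \<le> S" "S \<le> Sb"
  shows "S / s2 + nparams p k * (\<kappa> / real n powr \<delta> * \<sigma>0\<^sup>2 / 4) / s2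
      + nparams p k * ln ((1 + real k * (1 + (1 + S) * (real p + 1))) * sqrt (2 * pi * s2)
          / (\<sigma>0 * sqrt (\<kappa> / real n powr \<delta>)))
    \<le> Sb / s2 + (1 + kb * (real p + 2)) * (\<kappa> * \<sigma>0\<^sup>2 / 4 * real n powr - \<delta> / s2)
      + (1 + kb * (real p + 2)) * \<bar>ln (1 + kb * (1 + (1 + Sb) * (real p + 1))) + ln (sqrt (2 * pi * s2))
          - ln (\<sigma>0 * sqrt \<kappa>) + \<delta> / 2 * ln (real n)\<bar>"
proof -
  define K where "K = real (nparams p k)"
  define Kb where "Kb = 1 + kb * (real p + 2)"
  define C where "C = 1 + real k * (1 + (1 + S) * (real p + 1))"
  define Cb where "Cb = 1 + kb * (1 + (1 + Sb) * (real p + 1))"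
  have "real k * (real p + 2) \<le> kb * (real p + 2)"
    using assms(5) by (intro mult_right_mono) auto
  then have "0 \<le> K" "K \<le> Kb"
    unfolding K_def Kb_def nparams_def by (simp_all add: algebra_simps)
  have "1 + (1 + S) * (real p + 1) \<le> 1 + (1 + Sb) * (real p + 1)"
    using assms(7) by (intro add_left_mono mult_right_mono) auto
  then have "real k * (1 + (1 + S) * (real p + 1)) \<le> kb * (1 + (1 + Sb) * (real p + 1))"
    using assms(5,6) by (intro mult_mono) auto
  then have "1 \<le> C" "C \<le> Cb"
    unfolding C_def Cb_def using assms(6) by auto
  \<comment> \<open>The logarithm can be negative, so the bound \<open>K \<le> Kb\<close> is applied to its absolute value.\<close>
  have "K * ln (C * sqrt (2 * pi * s2) / (\<sigma>0 * sqrt (\<kappa> / real n powr \<delta>)))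
      \<le> Kb * \<bar>ln Cb + ln (sqrt (2 * pi * s2)) - ln (\<sigma>0 * sqrt \<kappa>) + \<delta> / 2 * ln (real n)\<bar>"
    using assms(1-4) \<open>0 \<le> K\<close> \<open>K \<le> Kb\<close> \<open>1 \<le> C\<close> \<open>C \<le> Cb\<close>
    by (subst ln_div_sqrt_power_radius) (auto intro!: mult_le_mult_abs)
  moreover have "S / s2 \<le> Sb / s2"
    using assms(2,7) by (intro divide_right_mono) auto
  moreover have "K * (\<kappa> / real n powr \<delta> * \<sigma>0\<^sup>2 / 4) / s2 = K * (\<kappa> * \<sigma>0\<^sup>2 / 4 * real n powr - \<delta> / s2)"
    by (simp add: powr_minus_divide)
  moreover have "\<dots> \<le> Kb * (\<kappa> * \<sigma>0\<^sup>2 / 4 * real n powr - \<delta> / s2)"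
    using assms(2,4) \<open>K \<le> Kb\<close> by (intro mult_right_mono) auto
  ultimately show ?thesis
    unfolding K_def Kb_def C_def Cb_def by linarith
qed

lemma eventually_le_of_smallo:
  fixes f g :: "'a \<Rightarrow> real"
  assumes "f \<in> o[F](g)" "c > 0"
  shows "\<forall>\<^sub>F x in F. f x \<le> c * \<bar>g x\<bar>"
  using landau_o.smallD[OF assms] by eventually_elim (simp add: abs_le_D1)

lemma eventually_L2sq_less:
  assumes fit: "(\<lambda>n. L2dist p (g n) f0) \<in> o(\<lambda>n. real n powr - \<delta>)"
    and "0 \<le> \<delta>" "c > 0"
  shows "\<forall>\<^sub>F n in at_top. L2sq p (g n) f0 < c * real n powr - \<delta>"
proof -
  have "\<forall>\<^sub>F n in at_top. norm (real n powr - \<delta>) \<le> 1 * norm (1::real)"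
    using eventually_ge_at_top[of "1::nat"]
  proof eventually_elim
    case (elim n)
    have "real n powr - \<delta> \<le> real n powr 0"
      using elim \<open>0 \<le> \<delta>\<close> by (intro powr_mono) auto
    then show ?case
      using elim by simp
  qed
  then have "(\<lambda>n. real n powr - \<delta>) \<in> O(\<lambda>_. 1)"
    by (rule bigoI)
  with landau_o.small_imp_big[OF fit] have "(\<lambda>n. L2dist p (g n) f0) \<in> O(\<lambda>_. 1)"
    by (rule landau_o.big_trans)
  with fit have "(\<lambda>n. L2dist p (g n) f0 * L2dist p (g n) f0) \<in> o(\<lambda>n. real n powr - \<delta> * 1)"
    by (rule landau_o.small_big_mult)
  then have "(\<lambda>n. L2sq p (g n) f0) \<in> o(\<lambda>n. real n powr - \<delta>)"
    by (simp add: L2dist_def L2sq_nonneg)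
  from eventually_le_of_smallo[OF this half_gt_zero[OF \<open>c > 0\<close>]] eventually_gt_at_top[of 0]
  show ?thesis
  proof eventually_elim
    case (elim n)
    then have "0 < c * real n powr - \<delta>"
      using \<open>c > 0\<close> by simp
    with elim show ?case
      by (simp add: field_simps)
  qed
qed

lemma eventually_prior_mass_Nbhd_ge:
  fixes s2 Sb X :: "nat \<Rightarrow> real" and k :: "nat \<Rightarrow> nat" and \<theta>0 :: "nat \<Rightarrow> nat \<Rightarrow> real"
  assumes f0_meas: "f0 \<in> borel_measurable (cube p)"
    and f0_sq: "integrable (cube p) (\<lambda>x. (f0 x)\<^sup>2)"
    and "\<sigma>0 > 0" "\<kappa> > 0"
    and variance: "\<forall>\<^sub>F n in at_top. s2 n > 0"
    and width: "\<forall>\<^sub>F n in at_top. real (k n) \<le> c1 * real n powr a"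
    and fit: "\<forall>\<^sub>F n in at_top. L2sq p (fnet p (k n) (\<theta>0 n)) f0 < \<kappa> * \<sigma>0\<^sup>2 / 4 * real n powr - \<delta>"
    and size: "\<forall>\<^sub>F n in at_top. (\<Sum>i<nparams p (k n). (\<theta>0 n i)\<^sup>2) \<le> Sb n"
    and exponent: "\<forall>\<^sub>F n in at_top. Sb n / s2 n
      + (1 + c1 * real n powr a * (real p + 2)) * (\<kappa> * \<sigma>0\<^sup>2 / 4 * real n powr - \<delta> / s2 n)
      + (1 + c1 * real n powr a * (real p + 2))
        * \<bar>ln (1 + c1 * real n powr a * (1 + (1 + Sb n) * (real p + 1))) + ln (sqrt (2 * pi * s2 n))
           - ln (\<sigma>0 * sqrt \<kappa>) + \<delta> / 2 * ln (real n)\<bar> \<le> X n"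
  shows "\<forall>\<^sub>F n in at_top. ennreal (exp (- X n))
    \<le> prior_mass (s2 n) (nparams p (k n)) (Nbhd p (k n) \<sigma>0 f0 (\<kappa> / real n powr \<delta>))"
  using eventually_gt_at_top[of 0] variance width fit size exponent
proof eventually_elim
  case (elim n)
  have radius: "\<kappa> / real n powr \<delta> > 0"
    using \<open>\<kappa> > 0\<close> elim(1) by simp
  have fit_n: "L2sq p (fnet p (k n) (\<theta>0 n)) f0 < \<kappa> / real n powr \<delta> * \<sigma>0\<^sup>2 / 4"
    using elim(4) by (simp add: powr_minus_divide)
  have "(\<Sum>i<nparams p (k n). (\<theta>0 n i)\<^sup>2) \<ge> 0"
    by (simp add: sum_nonneg)
  note exponent_le = prior_exponent_le[where p = p and \<delta> = \<delta>, OF elim(1,2) \<open>\<sigma>0 > 0\<close> \<open>\<kappa> > 0\<close> elim(3) this elim(5)]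
  show ?case
    by (rule prior_mass_Nbhd_ge[OF f0_meas f0_sq \<open>\<sigma>0 > 0\<close> elim(2) radius fit_n order_trans[OF exponent_le elim(6)]])
qed

lemma eventually_prior_mass_Nbhd_ge_fixed_variance:
  fixes k :: "nat \<Rightarrow> nat" and \<theta>0 :: "nat \<Rightarrow> nat \<Rightarrow> real"
  assumes f0_meas: "f0 \<in> borel_measurable (cube p)"
    and f0_sq: "integrable (cube p) (\<lambda>x. (f0 x)\<^sup>2)"
    and "\<sigma>0 > 0" "\<zeta> > 0" "\<kappa> > 0" "\<kappa>' > 0" "0 < a" "0 \<le> \<delta>" "\<delta> < 1 - a" "c1 > 0"
    and width: "\<forall>\<^sub>F n in at_top. real (k n) \<le> c1 * real n powr a"
    and fit: "\<forall>\<^sub>F n in at_top. L2sq p (fnet p (k n) (\<theta>0 n)) f0 < \<kappa> * \<sigma>0\<^sup>2 / 4 * real n powr - \<delta>"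
    and size: "(\<lambda>n. \<Sum>i<nparams p (k n). (\<theta>0 n i)\<^sup>2) \<in> o(\<lambda>n. real n powr (1 - \<delta>))"
  shows "\<forall>\<^sub>F n in at_top. ennreal (exp (- \<kappa>' * real n powr (1 - \<delta>)))
    \<le> prior_mass (\<zeta>\<^sup>2) (nparams p (k n)) (Nbhd p (k n) \<sigma>0 f0 (\<kappa> / real n powr \<delta>))"
proof -
  \<comment> \<open>(A2) is applied with the constant that gives \<open>|\<theta>0n|^2 / \<zeta>^2\<close> half of the budget \<open>\<kappa>' n^(1-\<delta>)\<close>.\<close>
  define c where "c = \<kappa>' * \<zeta>\<^sup>2 / 2"
  have "c > 0"
    unfolding c_def using assms by simp
  have size_le: "\<forall>\<^sub>F n in at_top. (\<Sum>i<nparams p (k n). (\<theta>0 n i)\<^sup>2) \<le> c * real n powr (1 - \<delta>)"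
    using eventually_le_of_smallo[OF size \<open>c > 0\<close>] by simp
  have "(\<lambda>n. (1 + c1 * real n powr a * (real p + 2)) * (\<kappa> * \<sigma>0\<^sup>2 / 4 * real n powr - \<delta> / \<zeta>\<^sup>2)
      + (1 + c1 * real n powr a * (real p + 2))
        * \<bar>ln (1 + c1 * real n powr a * (1 + (1 + c * real n powr (1 - \<delta>)) * (real p + 1)))
           + ln (sqrt (2 * pi * \<zeta>\<^sup>2)) - ln (\<sigma>0 * sqrt \<kappa>) + \<delta> / 2 * ln (real n)\<bar>)
    \<in> o(\<lambda>n. real n powr (1 - \<delta>))" (is "(\<lambda>n. ?T1 n + ?T2 n) \<in> _")
    by (intro sum_in_smallo) (use assms \<open>c > 0\<close> in real_asymp)+
  from eventually_le_of_smallo[OF this half_gt_zero[OF \<open>\<kappa>' > 0\<close>]]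
  have "\<forall>\<^sub>F n in at_top. c * real n powr (1 - \<delta>) / \<zeta>\<^sup>2 + ?T1 n + ?T2 n \<le> \<kappa>' * real n powr (1 - \<delta>)"
  proof eventually_elim
    case (elim n)
    have half: "c * real n powr (1 - \<delta>) / \<zeta>\<^sup>2 = \<kappa>' * real n powr (1 - \<delta>) / 2"
      "\<kappa>' / 2 * \<bar>real n powr (1 - \<delta>)\<bar> = \<kappa>' * real n powr (1 - \<delta>) / 2"
      unfolding c_def using \<open>\<zeta> > 0\<close> by simp_all
    show ?case
      using elim[unfolded half(2)] unfolding half(1) by linarith
  qed
  from eventually_prior_mass_Nbhd_ge[OF f0_meas f0_sq \<open>\<sigma>0 > 0\<close> \<open>\<kappa> > 0\<close> _ width fit size_le this]
  show ?thesis
    using \<open>\<zeta> > 0\<close> by simp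
qed

lemma eventually_prior_mass_Nbhd_ge_growing_variance:
  fixes k :: "nat \<Rightarrow> nat" and \<theta>0 :: "nat \<Rightarrow> nat \<Rightarrow> real"
  assumes f0_meas: "f0 \<in> borel_measurable (cube p)"
    and f0_sq: "integrable (cube p) (\<lambda>x. (f0 x)\<^sup>2)"
    and "\<sigma>0 > 0" "\<zeta> > 0" "\<kappa> > 0" "\<kappa>' > 0" "0 < a" "0 \<le> \<delta>" "\<delta> < 1 - a" "c1 > 0"
    and width: "\<forall>\<^sub>F n in at_top. real (k n) \<le> c1 * real n powr a"
    and fit: "\<forall>\<^sub>F n in at_top. L2sq p (fnet p (k n) (\<theta>0 n)) f0 < \<kappa> * \<sigma>0\<^sup>2 / 4 * real n powr - \<delta>"
    and "v > 1" "u > v"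
    and size: "(\<lambda>n. \<Sum>i<nparams p (k n). (\<theta>0 n i)\<^sup>2) \<in> O(\<lambda>n. real n powr v)"
  shows "\<forall>\<^sub>F n in at_top. ennreal (exp (- \<kappa>' * real n powr (1 - \<delta>)))
    \<le> prior_mass (\<zeta>\<^sup>2 * real n powr u) (nparams p (k n)) (Nbhd p (k n) \<sigma>0 f0 (\<kappa> / real n powr \<delta>))"
proof -
  from size obtain B where "B > 0"
    and "\<forall>\<^sub>F n in at_top. norm (\<Sum>i<nparams p (k n). (\<theta>0 n i)\<^sup>2) \<le> B * norm (real n powr v)"
    by (elim landau_o.bigE)
  then have size_le: "\<forall>\<^sub>F n in at_top. (\<Sum>i<nparams p (k n). (\<theta>0 n i)\<^sup>2) \<le> B * real n powr v"
    by (auto elim!: eventually_mono dest: abs_le_D1)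
  have "(\<lambda>n. B * real n powr v / (\<zeta>\<^sup>2 * real n powr u)
      + (1 + c1 * real n powr a * (real p + 2)) * (\<kappa> * \<sigma>0\<^sup>2 / 4 * real n powr - \<delta> / (\<zeta>\<^sup>2 * real n powr u))
      + (1 + c1 * real n powr a * (real p + 2))
        * \<bar>ln (1 + c1 * real n powr a * (1 + (1 + B * real n powr v) * (real p + 1)))
           + ln (sqrt (2 * pi * (\<zeta>\<^sup>2 * real n powr u))) - ln (\<sigma>0 * sqrt \<kappa>) + \<delta> / 2 * ln (real n)\<bar>)
    \<in> o(\<lambda>n. real n powr (1 - \<delta>))" (is "?E \<in> _")
    using assms \<open>B > 0\<close> by real_asymp
  from eventually_le_of_smallo[OF this \<open>\<kappa>' > 0\<close>]
  have "\<forall>\<^sub>F n in at_top. ?E n \<le> \<kappa>' * real n powr (1 - \<delta>)"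
    by eventually_elim simp
  moreover have "\<forall>\<^sub>F n in at_top. \<zeta>\<^sup>2 * real n powr u > 0"
    using eventually_gt_at_top[of 0] by eventually_elim (use \<open>\<zeta> > 0\<close> in simp)
  ultimately show ?thesis
    using eventually_prior_mass_Nbhd_ge[OF f0_meas f0_sq \<open>\<sigma>0 > 0\<close> \<open>\<kappa> > 0\<close> _ width fit size_le] by simp
qed

theorem proposition2:
  fixes p :: nat and \<sigma>0 \<zeta> a \<delta> :: real
    and f0 :: "(nat \<Rightarrow> real) \<Rightarrow> real"
    and k :: "nat \<Rightarrow> nat"
    and \<theta>0 :: "nat \<Rightarrow> nat \<Rightarrow> real"
  assumes p_pos: "p > 0"
    and sigma0: "\<sigma>0 > 0" and zeta: "\<zeta> > 0"
    and f0_meas: "f0 \<in> borel_measurable (cube p)"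
    and f0_sq: "integrable (cube p) (\<lambda>x. (f0 x)\<^sup>2)"
    and a: "0 < a" "a < 1"
    and kn: "(\<lambda>n. real (k n)) \<sim>[at_top] (\<lambda>n. real n powr a)"
    and delta: "0 \<le> \<delta>" "\<delta> < 1 - a"
    and A1: "(\<lambda>n. L2dist p (fnet p (k n) (\<theta>0 n)) f0) \<in> o(\<lambda>n. real n powr (- \<delta>))"
  shows "\<forall>\<kappa> \<kappa>'. \<kappa> > 0 \<and> \<kappa>' > 0 \<longrightarrow>
     (((\<lambda>n. \<Sum>i<nparams p (k n). (\<theta>0 n i)\<^sup>2) \<in> o(\<lambda>n. real n powr (1 - \<delta>)) \<longrightarrow>
        (\<forall>\<^sub>F n in at_top.
           ennreal (exp (- \<kappa>' * real n powr (1 - \<delta>)))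
           \<le> prior_mass (\<zeta>\<^sup>2) (nparams p (k n))
                (Nbhd p (k n) \<sigma>0 f0 (\<kappa> / real n powr \<delta>))))
      \<and>
      (\<forall>v u. v > 1 \<and> u > v \<and>
        (\<lambda>n. \<Sum>i<nparams p (k n). (\<theta>0 n i)\<^sup>2) \<in> O(\<lambda>n. real n powr v) \<longrightarrow>
        (\<forall>\<^sub>F n in at_top.
           ennreal (exp (- \<kappa>' * real n powr (1 - \<delta>)))
           \<le> prior_mass (\<zeta>\<^sup>2 * real n powr u) (nparams p (k n))
                (Nbhd p (k n) \<sigma>0 f0 (\<kappa> / real n powr \<delta>)))))"
proof -
  obtain c1 where "c1 > 0" and width: "\<forall>\<^sub>F n in at_top. real (k n) \<le> c1 * real n powr a"
  proof -
    from asymp_equiv_imp_bigo[OF kn] obtain c where "c > 0"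
      and "\<forall>\<^sub>F n in at_top. norm (real (k n)) \<le> c * norm (real n powr a)"
      by (elim landau_o.bigE)
    then show thesis
      by (intro that[of c]) (auto elim!: eventually_mono)
  qed
  have fit: "\<forall>\<^sub>F n in at_top. L2sq p (fnet p (k n) (\<theta>0 n)) f0 < \<kappa> * \<sigma>0\<^sup>2 / 4 * real n powr - \<delta>"
    if "\<kappa> > 0" for \<kappa>
    using that sigma0 by (intro eventually_L2sq_less[OF A1 delta(1)]) simp
  show ?thesis
    using eventually_prior_mass_Nbhd_ge_fixed_variance[OF f0_meas f0_sq sigma0 zeta _ _ a(1) delta \<open>c1 > 0\<close> width fit]
      eventually_prior_mass_Nbhd_ge_growing_variance[OF f0_meas f0_sq sigma0 zeta _ _ a(1) delta \<open>c1 > 0\<close> width fit]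
    by blast
qed

end
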